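(* Fix $R>0$ and let $S:=\{x=(x',x_n): x'\in\mathbb{R}^{n-1},\ 0<x_n<2R\}$, $d(x):=\operatorname{dist}(x,\mathbb{R}^n\setminus S)$. Suppose that for some $\alpha\ge0$ and $s\ge1$ there is $C_0>0$ with $$\inf_{u\in C_c^\infty(S)\setminus\{0\}}\frac{\int_S\frac{|\nabla u|}{d^{s-1}}dx-(s-1)\int_S\frac{|u|}{d^s}dx}{\int_S\frac{|\nabla u|}{d^\alpha}dx}\ \ge\ C_0.$$ Then $\alpha=0$. *)

theory Defs
  imports "HOL-Analysis.Analysis"
begin

definition partial :: "'n::finite \<Rightarrow> (real^'n \<Rightarrow> real) \<Rightarrow> real^'n \<Rightarrow> real" where
  "partial i f x = deriv (\<lambda>t. f (x + t *\<^sub>R axis i 1)) 0"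

fun iter_partial :: "'n::finite list \<Rightarrow> (real^'n \<Rightarrow> real) \<Rightarrow> real^'n \<Rightarrow> real" where
  "iter_partial [] f = f"
| "iter_partial (i # is) f = partial i (iter_partial is f)"

definition smooth :: "(real^'n::finite \<Rightarrow> real) \<Rightarrow> bool" where
  "smooth f \<longleftrightarrow> (\<forall>is. continuous_on UNIV (iter_partial is f) \<and>
      (\<forall>x i. (\<lambda>t. iter_partial is f (x + t *\<^sub>R axis i 1)) differentiable (at 0)))"

definition tsupport :: "(real^'n::finite \<Rightarrow> real) \<Rightarrow> (real^'n) set" where
  "tsupport f = closure {x. f x \<noteq> 0}"

definition Cc_inf :: "(real^'n::finite) set \<Rightarrow> (real^'n \<Rightarrow> real) set" where
  "Cc_inf S = {f. smooth f \<and> compact (tsupport f) \<and> tsupport f \<subseteq> S}"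

definition grad :: "(real^'n::finite \<Rightarrow> real) \<Rightarrow> real^'n \<Rightarrow> real^'n" where
  "grad f x = (\<chi> i. partial i f x)"

text \<open>The slab S = {x : 0 < x_k < 2R}, k the distinguished (last) coordinate.\<close>
definition slab :: "'n::finite \<Rightarrow> real \<Rightarrow> (real^'n) set" where
  "slab k R = {x. 0 < x $ k \<and> x $ k < 2 * R}"

end

theory Submission
  imports Defs "HOL-Computational_Algebra.Polynomial"
begin

text \<open>
  Suppose \<open>\<alpha> > 0\<close> and test the inequality on \<open>u(x) = \<psi>(x_k) \<Prod>\<^sub>i \<chi>(x_i)\<close> (product over
  \<open>i \<noteq> k\<close>), where the smooth bump \<open>\<psi>\<close> rises from 0 to 1 on \<open>[a, a + h]\<close>, falls symmetrically
  near \<open>2R\<close>, and the plateau \<open>\<chi>\<close> equals 1 on \<open>[-L, L]\<close>. On the slab \<open>d(x) = min x_k (2R - x_k)\<close>,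
  so every weighted integral factors into one-dimensional ones. The rising edge of \<open>\<psi>\<close> lies
  within distance \<open>a + h\<close> of the boundary, hence the denominator is at least \<open>(a + h)^(-\<alpha>) Q\<close>,
  \<open>Q\<close> being the mass of the transverse plateaus. In the numerator the normal derivative
  contributes at most \<open>2 a^(1 - s) Q\<close>, while \<open>(s - 1) \<integral> |u| / d^s \<ge> 2 ((a + h)^(1 - s) - R^(1 - s)) Q\<close>;
  for \<open>h = a^s\<close> convexity of \<open>t^(1 - s)\<close> bounds the difference by \<open>(2 (s - 1) + 2 R^(1 - s)) Q\<close>.
  The tangential derivatives contribute \<open>O(R a^(1 - s) / L) Q\<close>, less than \<open>Q\<close> for large \<open>L\<close>.
  So the quotient is at most \<open>K (a + h)^\<alpha>\<close> with \<open>K\<close> independent of \<open>a\<close>, and this tends to 0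
  with \<open>a\<close>.
\<close>

section \<open>Lebesgue integrals of coordinatewise products\<close>

lemma lborel_integral_prod_Basis:
  fixes f :: "'a::euclidean_space \<Rightarrow> real \<Rightarrow> real"
  assumes int: "\<And>b. b \<in> Basis \<Longrightarrow> integrable lborel (f b)"
  shows "integrable lborel (\<lambda>x::'a. \<Prod>b\<in>Basis. f b (x \<bullet> b))"
    "(\<integral>x. (\<Prod>b\<in>Basis. f b (x \<bullet> b)) \<partial>(lborel::'a measure)) = (\<Prod>b\<in>Basis. \<integral>x. f b x \<partial>lborel)"
proof -
  interpret product_sigma_finite "\<lambda>_::'a. lborel::real measure" by standard
  have meas[measurable]: "\<And>b. b \<in> Basis \<Longrightarrow> f b \<in> borel_measurable borel"
    using int by (simp add: borel_measurable_integrable)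
  have T: "(\<lambda>g. \<Sum>b\<in>Basis. g b *\<^sub>R b) \<in> measurable (\<Pi>\<^sub>M b\<in>Basis. lborel) (borel::'a measure)"
    by measurable
  have eq: "\<And>g. g \<in> space (\<Pi>\<^sub>M b\<in>Basis. lborel) \<Longrightarrow>
     (\<Prod>b\<in>Basis. f b ((\<Sum>c\<in>Basis. g c *\<^sub>R c) \<bullet> b)) = (\<Prod>b\<in>Basis. f b (g b))"
    by (intro prod.cong refl) (simp add: inner_sum_left inner_Basis if_distrib sum.delta cong: if_cong)
  have pi: "integrable (\<Pi>\<^sub>M b\<in>Basis. lborel) (\<lambda>g. \<Prod>b\<in>Basis. f b (g b))"
    by (rule product_integrable_prod) (auto intro: int)
  have mp: "(\<lambda>x::'a. \<Prod>b\<in>Basis. f b (x \<bullet> b)) \<in> borel_measurable borel"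
    by measurable
  have "integrable lborel (\<lambda>x::'a. \<Prod>b\<in>Basis. f b (x \<bullet> b))
    \<longleftrightarrow> integrable (\<Pi>\<^sub>M b\<in>Basis. lborel) (\<lambda>g. \<Prod>b\<in>Basis. f b (g b))"
    by (subst lborel_eq, subst integrable_distr_eq[OF T mp]) (rule Bochner_Integration.integrable_cong[OF refl eq])
  with pi show "integrable lborel (\<lambda>x::'a. \<Prod>b\<in>Basis. f b (x \<bullet> b))" by simp
  have "(\<integral>x. (\<Prod>b\<in>Basis. f b (x \<bullet> b)) \<partial>(lborel::'a measure))
    = (\<integral>g. (\<Prod>b\<in>Basis. f b (g b)) \<partial>(\<Pi>\<^sub>M b\<in>Basis. lborel))"
    by (subst lborel_eq, subst integral_distr[OF T mp]) (rule Bochner_Integration.integral_cong[OF refl eq])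
  also have "\<dots> = (\<Prod>b\<in>Basis. \<integral>x. f b x \<partial>lborel)"
    by (rule product_integral_prod) (auto intro: int)
  finally show "(\<integral>x. (\<Prod>b\<in>Basis. f b (x \<bullet> b)) \<partial>(lborel::'a measure)) = (\<Prod>b\<in>Basis. \<integral>x. f b x \<partial>lborel)" .
qed

lemma Basis_real_vec: "(Basis :: (real^'n::finite) set) = range (\<lambda>i. axis i 1)"
  by (auto simp: Basis_vec_def)

lemma inj_axis_1: "inj (\<lambda>i::'n::finite. axis i (1::real))"
  by (auto simp: inj_def axis_eq_axis)

lemma lborel_integral_prod_vec:
  fixes h :: "'n::finite \<Rightarrow> real \<Rightarrow> real"
  assumes int: "\<And>i. integrable lborel (h i)"
  shows "integrable lborel (\<lambda>x::real^'n. \<Prod>i\<in>UNIV. h i (x $ i))"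
    "(\<integral>x. (\<Prod>i\<in>UNIV. h i (x $ i)) \<partial>(lborel::(real^'n) measure)) = (\<Prod>i\<in>UNIV. \<integral>t. h i t \<partial>lborel)"
proof -
  define f where "f b = h (axis_index b)" for b :: "real^'n"
  have e1: "(\<Prod>b\<in>Basis. f b (x \<bullet> b)) = (\<Prod>i\<in>UNIV. h i (x $ i))" for x :: "real^'n"
    unfolding Basis_real_vec by (subst prod.reindex[OF inj_axis_1]) (simp add: f_def cart_eq_inner_axis)
  have e2: "(\<Prod>b\<in>Basis. \<integral>t. f b t \<partial>lborel) = (\<Prod>i\<in>UNIV. \<integral>t. h i t \<partial>lborel)"
    unfolding Basis_real_vec by (subst prod.reindex[OF inj_axis_1]) (simp add: f_def)
  have fi: "\<And>b. b \<in> (Basis :: (real^'n) set) \<Longrightarrow> integrable lborel (f b)"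
    by (simp add: f_def int)
  show "integrable lborel (\<lambda>x::real^'n. \<Prod>i\<in>UNIV. h i (x $ i))"
    using lborel_integral_prod_Basis(1)[of f, OF fi] by (simp add: e1)
  show "(\<integral>x. (\<Prod>i\<in>UNIV. h i (x $ i)) \<partial>(lborel::(real^'n) measure)) = (\<Prod>i\<in>UNIV. \<integral>t. h i t \<partial>lborel)"
    using lborel_integral_prod_Basis(2)[of f, OF fi] by (simp add: e1 e2)
qed

lemma integrable_continuous_on_vanishing_outside:
  fixes f :: "real \<Rightarrow> real"
  assumes "continuous_on {lo..hi} f" "\<And>t. t \<notin> {lo..hi} \<Longrightarrow> f t = 0"
  shows "integrable lborel f"
proof -
  have "f = (\<lambda>t. indicator {lo..hi} t *\<^sub>R f t)" using assms(2) by (auto simp: fun_eq_iff indicator_def)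
  then show ?thesis using borel_integrable_compact[OF compact_Icc assms(1)] by simp
qed

section \<open>Smooth functions of one real variable\<close>

coinductive smooth_real :: "(real \<Rightarrow> real) \<Rightarrow> bool" where
  "(\<And>x. (f has_real_derivative f' x) (at x)) \<Longrightarrow> smooth_real f' \<Longrightarrow> smooth_real f"

lemma smooth_realD:
  assumes "smooth_real f"
  shows "(f has_real_derivative deriv f x) (at x)" "smooth_real (deriv f)"
proof -
  from assms obtain f' where d: "\<And>x. (f has_real_derivative f' x) (at x)" and c: "smooth_real f'"
    by (cases rule: smooth_real.cases) auto
  have "deriv f = f'" using d by (auto intro!: ext DERIV_imp_deriv)
  then show "(f has_real_derivative deriv f x) (at x)" "smooth_real (deriv f)" using d c by auto
qed

lemma smooth_real_continuous_on: "smooth_real f \<Longrightarrow> continuous_on UNIV f"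
  by (meson DERIV_isCont smooth_realD(1) continuous_at_imp_continuous_on)

lemma smooth_real_deriv_funpow: "smooth_real f \<Longrightarrow> smooth_real ((deriv ^^ m) f)"
  by (induction m) (auto intro: smooth_realD(2))

inductive_set fun_algebra :: "(real \<Rightarrow> real) set \<Rightarrow> (real \<Rightarrow> real) set" for B where
  base: "f \<in> B \<Longrightarrow> f \<in> fun_algebra B"
| const: "(\<lambda>x. c) \<in> fun_algebra B"
| add: "f \<in> fun_algebra B \<Longrightarrow> g \<in> fun_algebra B \<Longrightarrow> (\<lambda>x. f x + g x) \<in> fun_algebra B"
| mult: "f \<in> fun_algebra B \<Longrightarrow> g \<in> fun_algebra B \<Longrightarrow> (\<lambda>x. f x * g x) \<in> fun_algebra B"

lemma fun_algebra_has_derivative: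
  assumes B: "\<forall>f\<in>B. \<exists>f'\<in>fun_algebra B. \<forall>x. (f has_real_derivative f' x) (at x)"
  assumes "f \<in> fun_algebra B"
  shows "\<exists>f'\<in>fun_algebra B. \<forall>x. (f has_real_derivative f' x) (at x)"
  using assms(2)
proof induction
  case (base f) then show ?case using B by blast
next
  case (const c) then show ?case by (intro bexI[of _ "\<lambda>x. 0"]) (auto intro: fun_algebra.const)
next
  case (add f g)
  then obtain f' g' where "f' \<in> fun_algebra B" "g' \<in> fun_algebra B" "\<forall>x. (f has_real_derivative f' x) (at x)"
    "\<forall>x. (g has_real_derivative g' x) (at x)" by blast
  then show ?case by (intro bexI[of _ "\<lambda>x. f' x + g' x"]) (auto intro: fun_algebra.add derivative_intros)
next
  case (mult f g)
  then obtain f' g' where "f' \<in> fun_algebra B" "g' \<in> fun_algebra B" "\<forall>x. (f has_real_derivative f' x) (at x)"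
    "\<forall>x. (g has_real_derivative g' x) (at x)" by blast
  then show ?case
    by (intro bexI[of _ "\<lambda>x. f' x * g x + f x * g' x"])
       (auto intro!: fun_algebra.add fun_algebra.mult mult intro: derivative_eq_intros)
qed

lemma fun_algebra_smooth_real:
  assumes B: "\<forall>f\<in>B. \<exists>f'\<in>fun_algebra B. \<forall>x. (f has_real_derivative f' x) (at x)"
  assumes "f \<in> fun_algebra B"
  shows "smooth_real f"
  using assms(2)
proof (coinduction arbitrary: f rule: smooth_real.coinduct)
  case (smooth_real f)
  then obtain f' where "f' \<in> fun_algebra B" "\<forall>x. (f has_real_derivative f' x) (at x)"
    using fun_algebra_has_derivative[OF B] by blast
  then show ?case by blast
qed

lemma smooth_real_deriv_closed: "\<forall>f\<in>{f. smooth_real f}. \<exists>f'\<in>fun_algebra {f. smooth_real f}. \<forall>x. (f has_real_derivative f' x) (at x)"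
  using smooth_realD by (blast intro: fun_algebra.base)

lemma smooth_real_add: "smooth_real f \<Longrightarrow> smooth_real g \<Longrightarrow> smooth_real (\<lambda>x. f x + g x)"
  by (rule fun_algebra_smooth_real[OF smooth_real_deriv_closed]) (auto intro: fun_algebra.intros)

lemma smooth_real_mult: "smooth_real f \<Longrightarrow> smooth_real g \<Longrightarrow> smooth_real (\<lambda>x. f x * g x)"
  by (rule fun_algebra_smooth_real[OF smooth_real_deriv_closed]) (auto intro: fun_algebra.intros)

lemma smooth_real_inverse:
  assumes h: "smooth_real h" and nz: "\<And>x. h x \<noteq> 0"
  shows "smooth_real (\<lambda>x. inverse (h x))"
proof (rule fun_algebra_smooth_real[of "{f. smooth_real f} \<union> {\<lambda>x. inverse (h x)}"])
  let ?B = "{f. smooth_real f} \<union> {\<lambda>x. inverse (h x)}"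
  show "\<forall>f\<in>?B. \<exists>f'\<in>fun_algebra ?B. \<forall>x. (f has_real_derivative f' x) (at x)"
  proof
    fix f assume "f \<in> ?B"
    then show "\<exists>f'\<in>fun_algebra ?B. \<forall>x. (f has_real_derivative f' x) (at x)"
    proof
      assume "f \<in> {f. smooth_real f}"
      then show ?thesis using smooth_realD[of f] by (blast intro: fun_algebra.base)
    next
      assume "f \<in> {\<lambda>x. inverse (h x)}"
      then have f: "f = (\<lambda>x. inverse (h x))" by simp
      have M: "(\<lambda>x. (- 1 * deriv h x) * inverse (h x) * inverse (h x)) \<in> fun_algebra ?B"
        using smooth_realD(2)[OF h] by (intro fun_algebra.mult fun_algebra.const fun_algebra.base) auto
      have D: "\<forall>x. (f has_real_derivative (- 1 * deriv h x) * inverse (h x) * inverse (h x)) (at x)"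
        unfolding f
        by (auto intro!: derivative_eq_intros smooth_realD(1)[OF h] nz simp: power2_eq_square field_simps)
      show ?thesis using D by (intro bexI[OF _ M]) simp
    qed
  qed
qed (auto intro: fun_algebra.base)

lemma smooth_real_scaled_affine:
  assumes "smooth_real f"
  shows "smooth_real (\<lambda>t. m * f (c * t + e))"
  using assms
proof (coinduction arbitrary: f m rule: smooth_real.coinduct)
  case (smooth_real f m)
  have "\<forall>x. ((\<lambda>t. m * f (c * t + e)) has_real_derivative (m * c) * deriv f (c * x + e)) (at x)"
    by (auto intro!: derivative_eq_intros DERIV_chain2[OF smooth_realD(1)[OF smooth_real]] simp: field_simps)
  then show ?case
    using smooth_realD(2)[OF smooth_real]
    by (intro exI[of _ "\<lambda>t. m * f (c * t + e)"] exI[of _ "\<lambda>x. m * c * deriv f (c * x + e)"])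
      (auto intro!: exI[of _ "deriv f"] exI[of _ "m * c"])
qed

lemma smooth_real_affine: "smooth_real f \<Longrightarrow> smooth_real (\<lambda>t. f (c * t + e))"
  using smooth_real_scaled_affine[of f 1 c e] by simp

section \<open>A smooth step function\<close>

lemma poly_times_exp_neg_tendsto_0: "((\<lambda>y. poly p y * exp (- y)) \<longlongrightarrow> (0::real)) at_top"
proof -
  have "((\<lambda>y. \<Sum>i\<le>degree p. coeff p i * (y ^ i / exp y)) \<longlongrightarrow> (\<Sum>i\<le>degree p. coeff p i * 0)) at_top"
    by (intro tendsto_sum tendsto_mult tendsto_const tendsto_power_div_exp_0)
  moreover have "(\<lambda>y. \<Sum>i\<le>degree p. coeff p i * (y ^ i / exp y)) = (\<lambda>y. poly p y * exp (- y))"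
    by (auto simp: poly_altdef sum_divide_distrib exp_minus divide_inverse[symmetric] intro!: ext sum.cong)
  ultimately show ?thesis by simp
qed

definition poly_exp_recip :: "real poly \<Rightarrow> real \<Rightarrow> real" where
  "poly_exp_recip p t = (if t > 0 then poly p (1/t) * exp (- (1/t)) else 0)"

lemma poly_exp_recip_tendsto_0: "((\<lambda>t. poly p (1/t) * exp (- (1/t))) \<longlongrightarrow> 0) (at_right (0::real))"
proof -
  have "filterlim (\<lambda>t::real. 1/t) at_top (at_right 0)"
    using filterlim_inverse_at_top_right by (simp add: inverse_eq_divide)
  from filterlim_compose[OF poly_times_exp_neg_tendsto_0 this] show ?thesis by simp
qed

lemma poly_exp_recip_has_derivative:
  "(poly_exp_recip p has_real_derivative poly_exp_recip ([:0,0,1:] * (p - pderiv p)) x) (at x)"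
proof -
  let ?q = "[:0,0,1:] * (p - pderiv p)"
  have formula: "((\<lambda>t. poly p (1/t) * exp (- (1/t))) has_real_derivative
      poly ?q (1/x) * exp (- (1/x))) (at x)" if "x \<noteq> 0" for x
    using that
    by (auto intro!: derivative_eq_intros DERIV_chain2[OF poly_DERIV] simp: poly_diff algebra_simps)
  consider "x > 0" | "x < 0" | "x = 0" by linarith
  then show ?thesis
  proof cases
    case 1
    have e: "poly_exp_recip ?q x = poly ?q (1/x) * exp (-(1/x))" using 1 by (simp add: poly_exp_recip_def)
    show ?thesis unfolding e
      by (rule has_field_derivative_transform_within_open[where S="{0<..}", OF formula])
        (use 1 in \<open>auto simp: poly_exp_recip_def\<close>)
  next
    case 2
    have e: "poly_exp_recip ?q x = 0" using 2 by (simp add: poly_exp_recip_def)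
    show ?thesis unfolding e
      by (rule has_field_derivative_transform_within_open[where S="{..<0}", OF DERIV_const])
        (use 2 in \<open>auto simp: poly_exp_recip_def\<close>)
  next
    case 3
    have r: "((\<lambda>y. (poly_exp_recip p y - poly_exp_recip p 0) / (y - 0)) \<longlongrightarrow> 0) (at_right 0)"
    proof -
      have "((\<lambda>t. poly (p * [:0,1:]) (1/t) * exp (- (1/t))) \<longlongrightarrow> 0) (at_right (0::real))"
        by (rule poly_exp_recip_tendsto_0)
      moreover have "\<forall>\<^sub>F y in at_right 0. poly (p * [:0,1:]) (1/y) * exp (- (1/y)) = (poly_exp_recip p y - poly_exp_recip p 0) / (y - 0)"
        by (rule eventually_at_rightI[of 0 1]) (auto simp: poly_exp_recip_def)
      ultimately show ?thesis by (rule Lim_transform_eventually)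
    qed
    have l: "((\<lambda>y. (poly_exp_recip p y - poly_exp_recip p 0) / (y - 0)) \<longlongrightarrow> 0) (at_left 0)"
    proof -
      have "\<forall>\<^sub>F y in at_left 0. 0 = (poly_exp_recip p y - poly_exp_recip p 0) / (y - (0::real))"
        by (rule eventually_at_leftI[of "-1"]) (auto simp: poly_exp_recip_def)
      then show ?thesis by (intro Lim_transform_eventually[OF tendsto_const])
    qed
    have "((\<lambda>y. (poly_exp_recip p y - poly_exp_recip p 0) / (y - 0)) \<longlongrightarrow> 0) (at 0)"
      using r l by (simp add: filterlim_at_split)
    then show ?thesis using 3 by (simp add: has_field_derivative_iff poly_exp_recip_def)
  qed
qed

lemma smooth_real_poly_exp_recip: "smooth_real (poly_exp_recip p)"
proof -
  have "smooth_real g" if "\<exists>p. g = poly_exp_recip p" for g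
    using that
  proof (coinduction arbitrary: g rule: smooth_real.coinduct)
    case (smooth_real g)
    then obtain p where g: "g = poly_exp_recip p" by blast
    show ?case using poly_exp_recip_has_derivative[of p] g by blast
  qed
  then show ?thesis by blast
qed

definition exp_recip :: "real \<Rightarrow> real" where "exp_recip = poly_exp_recip 1"

lemma exp_recip_eq: "exp_recip t = (if t > 0 then exp (- (1/t)) else 0)"
  by (simp add: exp_recip_def poly_exp_recip_def)

lemma exp_recip_nonneg: "exp_recip t \<ge> 0" by (simp add: exp_recip_eq)
lemma exp_recip_pos: "t > 0 \<Longrightarrow> exp_recip t > 0" by (simp add: exp_recip_eq)

lemma exp_recip_mono: "x \<le> y \<Longrightarrow> exp_recip x \<le> exp_recip y"
  by (auto simp: exp_recip_eq divide_simps)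

definition smooth_step :: "real \<Rightarrow> real" where
  "smooth_step t = exp_recip t * inverse (exp_recip t + exp_recip (1 - t))"

lemma exp_recip_sum_pos: "exp_recip t + exp_recip (1 - t) > 0"
proof (cases "t > 0")
  case True then show ?thesis using exp_recip_pos[of t] exp_recip_nonneg[of "1-t"] by linarith
next
  case False then show ?thesis using exp_recip_pos[of "1-t"] exp_recip_nonneg[of t] by linarith
qed

lemma smooth_real_exp_recip: "smooth_real exp_recip" unfolding exp_recip_def by (rule smooth_real_poly_exp_recip)

lemma smooth_real_smooth_step: "smooth_real smooth_step"
proof -
  have "smooth_real (\<lambda>t. exp_recip t + exp_recip (1 - t))"
    using smooth_real_add[OF smooth_real_exp_recip smooth_real_affine[OF smooth_real_exp_recip, of "-1" 1]] by simp
  then have "smooth_real (\<lambda>t. inverse (exp_recip t + exp_recip (1 - t)))"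
    by (rule smooth_real_inverse) (use exp_recip_sum_pos in \<open>auto simp: less_le\<close>)
  then show ?thesis unfolding smooth_step_def[abs_def] by (rule smooth_real_mult[OF smooth_real_exp_recip])
qed

lemma smooth_step_eq_0: "t \<le> 0 \<Longrightarrow> smooth_step t = 0" by (simp add: smooth_step_def exp_recip_eq)
lemma smooth_step_eq_1: "t \<ge> 1 \<Longrightarrow> smooth_step t = 1"
  using exp_recip_sum_pos[of t] by (simp add: smooth_step_def exp_recip_eq)
lemma smooth_step_nonneg: "smooth_step t \<ge> 0" using exp_recip_sum_pos[of t] exp_recip_nonneg[of t] by (simp add: smooth_step_def)
lemma smooth_step_le_1: "smooth_step t \<le> 1" using exp_recip_sum_pos[of t] exp_recip_nonneg[of t] exp_recip_nonneg[of "1-t"]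
  by (simp add: smooth_step_def field_simps)

lemma smooth_step_mono: "x \<le> y \<Longrightarrow> smooth_step x \<le> smooth_step y"
proof -
  assume xy: "x \<le> y"
  have a: "exp_recip x \<le> exp_recip y" "exp_recip (1 - y) \<le> exp_recip (1 - x)" using xy by (auto intro: exp_recip_mono)
  have "exp_recip x * exp_recip (1 - y) \<le> exp_recip y * exp_recip (1 - x)"
    by (rule mult_mono) (use a exp_recip_nonneg in auto)
  then have "exp_recip x * (exp_recip y + exp_recip (1 - y)) \<le> exp_recip y * (exp_recip x + exp_recip (1 - x))"
    by (simp add: algebra_simps)
  then show ?thesis using exp_recip_sum_pos[of x] exp_recip_sum_pos[of y]
    by (simp add: smooth_step_def field_simps)
qed

definition dstep :: "real \<Rightarrow> real" where "dstep = deriv smooth_step"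

lemma smooth_step_has_derivative: "(smooth_step has_real_derivative dstep x) (at x)"
  unfolding dstep_def by (rule smooth_realD(1)[OF smooth_real_smooth_step])

lemma smooth_real_dstep: "smooth_real dstep" unfolding dstep_def by (rule smooth_realD(2)[OF smooth_real_smooth_step])

lemma dstep_nonneg: "dstep x \<ge> 0"
  by (rule mono_on_imp_deriv_nonneg[OF _ smooth_step_has_derivative, of UNIV]) (auto intro: mono_onI smooth_step_mono)

lemma dstep_eq_0_left: "x \<le> 0 \<Longrightarrow> dstep x = 0"
  by (rule DERIV_local_min[OF smooth_step_has_derivative, of 1]) (auto simp: smooth_step_eq_0 smooth_step_nonneg)

lemma dstep_eq_0_right: "x \<ge> 1 \<Longrightarrow> dstep x = 0"
  by (rule DERIV_local_max[OF smooth_step_has_derivative, of 1]) (auto simp: smooth_step_eq_1 smooth_step_le_1)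

lemma dstep_continuous_on: "continuous_on A dstep"
  using smooth_real_continuous_on[OF smooth_real_dstep] continuous_on_subset by blast

lemma dstep_integral: "(\<integral>t. dstep t \<partial>lborel) = 1" "integrable lborel dstep"
proof -
  have eq: "dstep = (\<lambda>t. indicator {0..1} t *\<^sub>R dstep t)"
    by (auto simp: fun_eq_iff indicator_def) (meson dstep_eq_0_left dstep_eq_0_right linear)+
  have "(\<integral>t. indicator {0..1} t *\<^sub>R dstep t \<partial>lborel) = smooth_step 1 - smooth_step 0"
    by (rule integral_FTC_atLeastAtMost)
       (auto intro!: has_vector_derivative_at_within smooth_step_has_derivative[unfolded has_real_derivative_iff_has_vector_derivative] dstep_continuous_on)
  then show "(\<integral>t. dstep t \<partial>lborel) = 1" by (subst eq) (simp add: smooth_step_eq_0 smooth_step_eq_1)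
  show "integrable lborel dstep"
    by (subst eq, rule borel_integrable_compact) (auto intro: dstep_continuous_on)
qed

lemma dstep_affine:
  assumes c: "c \<noteq> 0"
  shows "integrable lborel (\<lambda>t. dstep (c * t + e))" "(\<integral>t. dstep (c * t + e) \<partial>lborel) = 1 / \<bar>c\<bar>"
proof -
  show "integrable lborel (\<lambda>t. dstep (c * t + e))"
    using lborel_integrable_real_affine[OF dstep_integral(2) c, of e] by (simp add: add.commute)
  have "(\<integral>t. dstep t \<partial>lborel) = \<bar>c\<bar> *\<^sub>R (\<integral>x. dstep (e + c * x) \<partial>lborel)"
    by (rule lborel_integral_real_affine[OF c])
  then show "(\<integral>t. dstep (c * t + e) \<partial>lborel) = 1 / \<bar>c\<bar>"
    using c by (simp add: dstep_integral(1) add.commute field_simps)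
qed

section \<open>Smooth functions of product form\<close>

lemma prod_coordinates_has_derivative_line:
  fixes F :: "'n::finite \<Rightarrow> real \<Rightarrow> real"
  assumes "\<And>i. smooth_real (F i)"
  shows "((\<lambda>t. \<Prod>i\<in>UNIV. F i ((x + t *\<^sub>R axis j 1) $ i)) has_real_derivative
          (\<Prod>i\<in>UNIV. (if i = j then deriv (F i) else F i) (x $ i))) (at 0)"
proof -
  have e1: "(\<Prod>i\<in>UNIV. F i ((x + t *\<^sub>R axis j 1) $ i)) = F j (x $ j + t) * (\<Prod>i\<in>UNIV-{j}. F i (x $ i))" for t
    by (subst prod.remove[of UNIV j]) (auto simp: axis_def intro!: prod.cong)
  have e2: "(\<Prod>i\<in>UNIV. (if i = j then deriv (F i) else F i) (x $ i)) = deriv (F j) (x $ j) * (\<Prod>i\<in>UNIV-{j}. F i (x $ i))"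
    by (subst prod.remove[of UNIV j]) (auto intro!: prod.cong)
  have d: "((\<lambda>t. F j (x $ j + t)) has_real_derivative deriv (F j) (x $ j)) (at 0)"
  proof -
    have g: "((\<lambda>t. x $ j + t) has_real_derivative 1) (at 0)" by (auto intro!: derivative_eq_intros)
    from DERIV_chain2[where f="F j" and g="\<lambda>t. x $ j + t" and x=0, OF smooth_realD(1)[OF assms[of j]] g] show ?thesis by simp
  qed
  have "((\<lambda>t. F j (x $ j + t) * (\<Prod>i\<in>UNIV-{j}. F i (x $ i))) has_real_derivative
          deriv (F j) (x $ j) * (\<Prod>i\<in>UNIV-{j}. F i (x $ i))) (at 0)"
    by (rule DERIV_cmult_right[OF d])
  then show ?thesis by (simp only: e1 e2)
qed

lemma partial_prod_coordinates:
  fixes F :: "'n::finite \<Rightarrow> real \<Rightarrow> real"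
  assumes "\<And>i. smooth_real (F i)"
  shows "partial j (\<lambda>x. \<Prod>i\<in>UNIV. F i (x $ i)) x = (\<Prod>i\<in>UNIV. (if i = j then deriv (F i) else F i) (x $ i))"
  unfolding partial_def by (rule DERIV_imp_deriv[OF prod_coordinates_has_derivative_line[OF assms]])

lemma iter_partial_prod_coordinates:
  fixes H :: "'n::finite \<Rightarrow> real \<Rightarrow> real"
  assumes H: "\<And>i. smooth_real (H i)"
  shows "iter_partial is (\<lambda>x. \<Prod>i\<in>UNIV. H i (x $ i)) = (\<lambda>x. \<Prod>i\<in>UNIV. (deriv ^^ count_list is i) (H i) (x $ i))"
proof (induction "is")
  case Nil then show ?case by simp
next
  case (Cons j "is")
  have c: "\<And>i. smooth_real ((deriv ^^ count_list is i) (H i))" by (rule smooth_real_deriv_funpow[OF H])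
  show ?case
    by (auto simp: Cons partial_prod_coordinates[OF c] intro!: ext prod.cong)
qed

lemma smooth_prod_coordinates:
  fixes H :: "'n::finite \<Rightarrow> real \<Rightarrow> real"
  assumes H: "\<And>i. smooth_real (H i)"
  shows "smooth (\<lambda>x::real^'n. \<Prod>i\<in>UNIV. H i (x $ i))"
  unfolding smooth_def
proof (intro allI conjI)
  fix "is" :: "'n list"
  have c: "\<And>i. smooth_real ((deriv ^^ count_list is i) (H i))" by (rule smooth_real_deriv_funpow[OF H])
  show "continuous_on UNIV (iter_partial is (\<lambda>x::real^'n. \<Prod>i\<in>UNIV. H i (x $ i)))"
    unfolding iter_partial_prod_coordinates[OF H]
    by (intro continuous_intros continuous_on_compose2[OF smooth_real_continuous_on[OF c]]) auto
  fix x :: "real^'n" and j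
  show "(\<lambda>t. iter_partial is (\<lambda>x. \<Prod>i\<in>UNIV. H i (x $ i)) (x + t *\<^sub>R axis j 1)) differentiable at 0"
    unfolding iter_partial_prod_coordinates[OF H]
    unfolding real_differentiable_def
    using prod_coordinates_has_derivative_line[where x=x and j=j and F="\<lambda>i. (deriv ^^ count_list is i) (H i)", OF c] by blast
qed

lemma grad_prod_coordinates:
  fixes H :: "'n::finite \<Rightarrow> real \<Rightarrow> real"
  assumes H: "\<And>i. smooth_real (H i)"
  shows "grad (\<lambda>x. \<Prod>i\<in>UNIV. H i (x $ i)) x $ j = (\<Prod>i\<in>UNIV. (if i = j then deriv (H i) else H i) (x $ i))"
  by (simp add: grad_def partial_prod_coordinates[OF H])

lemma continuous_on_coordinate: "smooth_real f \<Longrightarrow> continuous_on UNIV (\<lambda>x::real^'n::finite. f (x $ i))"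
  by (rule continuous_on_compose2[OF smooth_real_continuous_on]) (auto intro: continuous_intros)

section \<open>Power integrals and the distance to the boundary of the slab\<close>

lemma powr_1_minus_diff_le:
  fixes a h s :: real
  assumes a: "0 < a" and h: "0 \<le> h" and s: "1 \<le> s"
  shows "a powr (1 - s) - (a + h) powr (1 - s) \<le> (s - 1) * h * a powr (- s)"
proof -
  let ?g = "\<lambda>x. x powr (1 - s) + (s - 1) * a powr (- s) * x"
  let ?g' = "\<lambda>x. (1 - s) * x powr (- s) + (s - 1) * a powr (- s)"
  have d: "(?g has_real_derivative ?g' x) (at x)" if "x \<in> {a..a+h}" for x
  proof -
    have x: "x > 0" using that a by auto
    have p: "((\<lambda>x. x powr (1 - s)) has_real_derivative (1 - s) * x powr (1 - s - 1)) (at x)"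
      by (rule has_real_derivative_powr) (use x in auto)
    have "(?g has_real_derivative (1 - s) * x powr (1 - s - 1) + (s - 1) * a powr (- s) * 1) (at x)"
      by (intro DERIV_add p DERIV_cmult DERIV_ident)
    then show ?thesis by simp
  qed
  have nn: "?g' x \<ge> 0" if "x \<in> {a..a+h}" for x
  proof -
    have "x powr (- s) \<le> a powr (- s)" using that a s by (intro powr_mono2') auto
    then have "(s - 1) * x powr (- s) \<le> (s - 1) * a powr (- s)" using s by (intro mult_left_mono) auto
    then show ?thesis by (simp add: algebra_simps)
  qed
  have "?g a \<le> ?g (a + h)" by (rule deriv_nonneg_imp_mono[OF d nn]) (use h in auto)
  then show ?thesis by (simp add: algebra_simps)
qed

lemma integral_powr_minus_Icc:
  fixes p q s :: real
  assumes "0 < p" "p \<le> q"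
  shows "(\<integral>t. indicator {p..q} t *\<^sub>R ((s - 1) * t powr (- s)) \<partial>lborel) = p powr (1 - s) - q powr (1 - s)"
proof -
  have "(\<integral>t. indicator {p..q} t *\<^sub>R ((s - 1) * t powr (- s)) \<partial>lborel) = - (q powr (1 - s)) - - (p powr (1 - s))"
  proof (rule integral_FTC_atLeastAtMost)
    fix x assume "p \<le> x" "x \<le> q"
    then have "((\<lambda>t. - (t powr (1 - s))) has_real_derivative - ((1 - s) * x powr (1 - s - 1))) (at x)"
      using assms by (intro DERIV_minus has_real_derivative_powr) auto
    then have "((\<lambda>t. - (t powr (1 - s))) has_real_derivative (s - 1) * x powr (- s)) (at x)"
      by (simp add: algebra_simps)
    then show "((\<lambda>t. - (t powr (1 - s))) has_vector_derivative (s - 1) * x powr (- s)) (at x within {p..q})"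
      by (simp add: has_real_derivative_iff_has_vector_derivative has_vector_derivative_at_within)
  qed (use assms in \<open>auto intro!: continuous_intros\<close>)
  then show ?thesis by simp
qed

lemma integral_powr_minus_reflected_Icc:
  fixes c p q s :: real
  assumes "0 < p" "p \<le> q"
  shows "(\<integral>t. indicator {c - q..c - p} t *\<^sub>R ((s - 1) * (c - t) powr (- s)) \<partial>lborel)
    = p powr (1 - s) - q powr (1 - s)"
proof -
  have "(\<integral>t. indicator {c - q..c - p} t *\<^sub>R ((s - 1) * (c - t) powr (- s)) \<partial>lborel)
      = (c - (c - p)) powr (1 - s) - (c - (c - q)) powr (1 - s)"
  proof (rule integral_FTC_atLeastAtMost)
    fix x assume "c - q \<le> x" "x \<le> c - p"
    then have "((\<lambda>t. (c - t) powr (1 - s)) has_real_derivative (1 - s) * (c - x) powr (1 - s - of_nat 1) * (- 1)) (at x)"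
      using assms by (intro DERIV_fun_powr) (auto intro!: derivative_eq_intros)
    then have "((\<lambda>t. (c - t) powr (1 - s)) has_real_derivative (s - 1) * (c - x) powr (- s)) (at x)"
      by (simp add: algebra_simps)
    then show "((\<lambda>t. (c - t) powr (1 - s)) has_vector_derivative (s - 1) * (c - x) powr (- s)) (at x within {c - q..c - p})"
      by (simp add: has_real_derivative_iff_has_vector_derivative has_vector_derivative_at_within)
  qed (use assms in \<open>auto intro!: continuous_intros\<close>)
  then show ?thesis by simp
qed

lemma infdist_slab:
  fixes x :: "real^'n::finite"
  assumes x: "x \<in> slab k R"
  shows "infdist x (UNIV - slab k R) = min (x $ k) (2 * R - x $ k)"
proof (rule antisym)
  have xk: "0 < x $ k" "x $ k < 2 * R" using x by (auto simp: slab_def)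
  let ?y1 = "x - (x $ k) *\<^sub>R axis k 1" and ?y2 = "x + (2 * R - x $ k) *\<^sub>R axis k 1"
  have y1: "?y1 \<in> UNIV - slab k R" by (simp add: slab_def axis_def)
  have y2: "?y2 \<in> UNIV - slab k R" by (simp add: slab_def axis_def)
  have "infdist x (UNIV - slab k R) \<le> dist x ?y1" by (rule infdist_le[OF y1])
  also have "\<dots> = x $ k" using xk by (simp add: dist_norm)
  finally have 1: "infdist x (UNIV - slab k R) \<le> x $ k" .
  have "infdist x (UNIV - slab k R) \<le> dist x ?y2" by (rule infdist_le[OF y2])
  also have "\<dots> = 2 * R - x $ k" using xk by (simp add: dist_norm norm_minus_commute)
  finally have 2: "infdist x (UNIV - slab k R) \<le> 2 * R - x $ k" .
  show "infdist x (UNIV - slab k R) \<le> min (x $ k) (2 * R - x $ k)" using 1 2 by simp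
  have ne: "UNIV - slab k R \<noteq> {}" using y1 by blast
  show "min (x $ k) (2 * R - x $ k) \<le> infdist x (UNIV - slab k R)"
    unfolding infdist_notempty[OF ne]
  proof (rule cINF_greatest[OF ne])
    fix y assume y: "y \<in> UNIV - slab k R"
    have "\<bar>x $ k - y $ k\<bar> \<le> dist x y"
      using component_le_norm_cart[of "x - y" k] by (simp add: dist_norm)
    moreover have "y $ k \<le> 0 \<or> y $ k \<ge> 2 * R" using y by (auto simp: slab_def)
    ultimately show "min (x $ k) (2 * R - x $ k) \<le> dist x y" by auto
  qed
qed

section \<open>The test functions\<close>

locale slab_test_fn =
  fixes R a h L :: real and k :: "'n::finite"
  assumes a: "0 < a" and h: "0 < h" and ah: "a + h < R" and L: "0 < L"
begin

definition bump :: "real \<Rightarrow> real" where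
  "bump t = smooth_step ((t - a) / h) * smooth_step ((2 * R - a - t) / h)"
definition dbump :: "real \<Rightarrow> real" where
  "dbump t = dstep ((t - a) / h) / h * smooth_step ((2 * R - a - t) / h) - smooth_step ((t - a) / h) * (dstep ((2 * R - a - t) / h) / h)"
definition plateau :: "real \<Rightarrow> real" where
  "plateau t = smooth_step (t + L + 1) * smooth_step (L + 1 - t)"
definition dplateau :: "real \<Rightarrow> real" where
  "dplateau t = dstep (t + L + 1) * smooth_step (L + 1 - t) - smooth_step (t + L + 1) * dstep (L + 1 - t)"
definition bdist :: "real \<Rightarrow> real" where
  "bdist t = min t (2 * R - t)"

lemma bump_has_derivative: "(bump has_real_derivative dbump t) (at t)"
proof -
  have d1: "((\<lambda>t. smooth_step ((t - a) / h)) has_real_derivative dstep ((t - a) / h) * (1 / h)) (at t)"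
    using h by (intro DERIV_chain2[OF smooth_step_has_derivative]) (auto intro!: derivative_eq_intros)
  have d2: "((\<lambda>t. smooth_step ((2 * R - a - t) / h)) has_real_derivative dstep ((2 * R - a - t) / h) * (- 1 / h)) (at t)"
    using h by (intro DERIV_chain2[OF smooth_step_has_derivative]) (auto intro!: derivative_eq_intros simp: field_simps)
  show ?thesis unfolding bump_def[abs_def]
    by (rule DERIV_mult[OF d1 d2, THEN DERIV_cong]) (use h in \<open>simp add: dbump_def field_simps\<close>)
qed

lemma deriv_bump: "deriv bump = dbump"
  using bump_has_derivative by (auto intro!: ext DERIV_imp_deriv)

lemma plateau_has_derivative: "(plateau has_real_derivative dplateau t) (at t)"
proof -
  have d1: "((\<lambda>t. smooth_step (t + L + 1)) has_real_derivative dstep (t + L + 1) * 1) (at t)"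
    by (rule DERIV_chain2[OF smooth_step_has_derivative]) (auto intro!: derivative_eq_intros)
  have d2: "((\<lambda>t. smooth_step (L + 1 - t)) has_real_derivative dstep (L + 1 - t) * (- 1)) (at t)"
    by (rule DERIV_chain2[OF smooth_step_has_derivative]) (auto intro!: derivative_eq_intros)
  show ?thesis unfolding plateau_def[abs_def]
    by (rule DERIV_mult[OF d1 d2, THEN DERIV_cong]) (simp add: dplateau_def field_simps)
qed

lemma deriv_plateau: "deriv plateau = dplateau"
  using plateau_has_derivative by (auto intro!: ext DERIV_imp_deriv)

lemma smooth_real_bump: "smooth_real bump"
proof -
  have e1: "(t - a) / h = (1/h) * t + (- a / h)" for t using h by (simp add: field_simps)
  have e2: "(2 * R - a - t) / h = (-1/h) * t + (2 * R - a) / h" for t using h by (simp add: field_simps)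
  have "bump = (\<lambda>t. smooth_step ((1/h) * t + (- a / h)) * smooth_step ((-1/h) * t + (2 * R - a) / h))"
    unfolding bump_def[abs_def] e1 e2 ..
  moreover have "smooth_real (\<lambda>t. smooth_step ((1/h) * t + (- a / h)) * smooth_step ((-1/h) * t + (2 * R - a) / h))"
    by (rule smooth_real_mult; rule smooth_real_affine[OF smooth_real_smooth_step])
  ultimately show ?thesis by simp
qed

lemma smooth_real_plateau: "smooth_real plateau"
proof -
  have "plateau = (\<lambda>t. smooth_step (1 * t + (L + 1)) * smooth_step ((-1) * t + (L + 1)))"
    by (auto simp: plateau_def fun_eq_iff field_simps)
  moreover have "smooth_real (\<lambda>t. smooth_step (1 * t + (L + 1)) * smooth_step ((-1) * t + (L + 1)))"
    by (rule smooth_real_mult; rule smooth_real_affine[OF smooth_real_smooth_step])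
  ultimately show ?thesis by simp
qed

lemma smooth_real_dbump: "smooth_real dbump" using smooth_realD(2)[OF smooth_real_bump] by (simp add: deriv_bump)
lemma smooth_real_dplateau: "smooth_real dplateau" using smooth_realD(2)[OF smooth_real_plateau] by (simp add: deriv_plateau)

lemma bump_eq_0: "t \<le> a \<or> t \<ge> 2 * R - a \<Longrightarrow> bump t = 0"
proof -
  assume "t \<le> a \<or> t \<ge> 2 * R - a"
  then have "(t - a) / h \<le> 0 \<or> (2 * R - a - t) / h \<le> 0" using h by (auto simp: divide_nonpos_pos)
  then show ?thesis by (auto simp: bump_def smooth_step_eq_0)
qed

lemma dbump_eq_0: "t \<le> a \<or> t \<ge> 2 * R - a \<Longrightarrow> dbump t = 0"
proof -
  assume "t \<le> a \<or> t \<ge> 2 * R - a"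
  then have "(t - a) / h \<le> 0 \<or> (2 * R - a - t) / h \<le> 0" using h by (auto simp: divide_nonpos_pos)
  then show ?thesis by (auto simp: dbump_def smooth_step_eq_0 dstep_eq_0_left)
qed

lemma bump_nonneg: "bump t \<ge> 0" by (simp add: bump_def smooth_step_nonneg)
lemma bump_le_1: "bump t \<le> 1" by (simp add: bump_def smooth_step_nonneg smooth_step_le_1 mult_le_one)

lemma bump_eq_1: "a + h \<le> t \<Longrightarrow> t \<le> 2 * R - a - h \<Longrightarrow> bump t = 1"
proof -
  assume "a + h \<le> t" "t \<le> 2 * R - a - h"
  then have "(t - a) / h \<ge> 1" "(2 * R - a - t) / h \<ge> 1" using h by (auto simp: field_simps)
  then show ?thesis by (simp add: bump_def smooth_step_eq_1)
qed

lemma dbump_left: "a \<le> t \<Longrightarrow> t \<le> a + h \<Longrightarrow> dbump t = dstep ((t - a) / h) / h"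
proof -
  assume t: "a \<le> t" "t \<le> a + h"
  have "(2 * R - a - t) / h \<ge> 1" using t ah h by (simp add: field_simps)
  then show ?thesis by (simp add: dbump_def smooth_step_eq_1 dstep_eq_0_right)
qed

lemma abs_dbump_le: "\<bar>dbump t\<bar> \<le> dstep ((t - a) / h) / h + dstep ((2 * R - a - t) / h) / h"
proof -
  have "\<bar>dbump t\<bar> \<le> \<bar>dstep ((t - a) / h) / h * smooth_step ((2 * R - a - t) / h)\<bar> + \<bar>smooth_step ((t - a) / h) * (dstep ((2 * R - a - t) / h) / h)\<bar>"
    unfolding dbump_def by (rule abs_triangle_ineq4)
  also have "\<dots> \<le> dstep ((t - a) / h) / h + dstep ((2 * R - a - t) / h) / h"
  proof -
    have 1: "dstep u / h * smooth_step v \<le> dstep u / h" for u v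
      using h by (intro mult_right_le_one_le) (auto simp: dstep_nonneg smooth_step_nonneg smooth_step_le_1)
    have 2: "smooth_step v * (dstep u / h) \<le> dstep u / h" for u v
      using h by (intro mult_left_le_one_le) (auto simp: dstep_nonneg smooth_step_nonneg smooth_step_le_1)
    show ?thesis using h 1 2 by (intro add_mono) (auto simp: abs_mult dstep_nonneg smooth_step_nonneg abs_of_nonneg)
  qed
  finally show ?thesis .
qed

lemma plateau_eq_0: "t \<le> -L - 1 \<or> t \<ge> L + 1 \<Longrightarrow> plateau t = 0"
  by (auto simp: plateau_def intro!: smooth_step_eq_0)

lemma dplateau_eq_0: "t \<le> -L - 1 \<or> t \<ge> L + 1 \<Longrightarrow> dplateau t = 0"
proof -
  assume "t \<le> -L - 1 \<or> t \<ge> L + 1"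
  then have "t + L + 1 \<le> 0 \<or> L + 1 - t \<le> 0" by auto
  then show ?thesis by (auto simp: dplateau_def smooth_step_eq_0 dstep_eq_0_left)
qed

lemma plateau_nonneg: "plateau t \<ge> 0" by (simp add: plateau_def smooth_step_nonneg)

lemma plateau_eq_1: "-L \<le> t \<Longrightarrow> t \<le> L \<Longrightarrow> plateau t = 1"
proof -
  assume "-L \<le> t" "t \<le> L"
  then have "t + L + 1 \<ge> 1" "L + 1 - t \<ge> 1" by auto
  then show ?thesis by (simp add: plateau_def smooth_step_eq_1)
qed

lemma abs_dplateau_le: "\<bar>dplateau t\<bar> \<le> dstep (t + L + 1) + dstep (L + 1 - t)"
proof -
  have "\<bar>dplateau t\<bar> \<le> \<bar>dstep (t + L + 1) * smooth_step (L + 1 - t)\<bar> + \<bar>smooth_step (t + L + 1) * dstep (L + 1 - t)\<bar>"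
    unfolding dplateau_def by (rule abs_triangle_ineq4)
  also have "\<dots> \<le> dstep (t + L + 1) + dstep (L + 1 - t)"
    using dstep_nonneg smooth_step_nonneg smooth_step_le_1
    by (intro add_mono) (auto simp: abs_mult intro!: mult_right_le_one_le mult_left_le_one_le)
  finally show ?thesis .
qed

lemma bdist_ge: "a \<le> t \<Longrightarrow> t \<le> 2 * R - a \<Longrightarrow> a \<le> bdist t"
  by (simp add: bdist_def)

lemma bdist_nonzero: "a \<le> t \<Longrightarrow> t \<le> 2 * R - a \<Longrightarrow> bdist t \<noteq> 0"
  using a by (simp add: bdist_def)

lemma bdist_continuous_on: "continuous_on A bdist"
  unfolding bdist_def[abs_def] by (intro continuous_intros)

lemma dstep_rise: "integrable lborel (\<lambda>t. dstep ((t - a) / h) / h)" "(\<integral>t. dstep ((t - a) / h) / h \<partial>lborel) = 1"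
proof -
  have e: "(t - a) / h = (1/h) * t + (- a / h)" for t using h by (simp add: field_simps)
  have c: "1/h \<noteq> 0" using h by simp
  show "integrable lborel (\<lambda>t. dstep ((t - a) / h) / h)" unfolding e
    by (intro integrable_divide_zero dstep_affine(1)[OF c])
  show "(\<integral>t. dstep ((t - a) / h) / h \<partial>lborel) = 1" unfolding e
    using dstep_affine(2)[OF c, of "- a / h"] h by simp
qed

lemma dstep_fall: "integrable lborel (\<lambda>t. dstep ((2 * R - a - t) / h) / h)" "(\<integral>t. dstep ((2 * R - a - t) / h) / h \<partial>lborel) = 1"
proof -
  have e: "(2 * R - a - t) / h = (-1/h) * t + (2 * R - a) / h" for t using h by (simp add: field_simps)
  have c: "-1/h \<noteq> 0" using h by simp
  show "integrable lborel (\<lambda>t. dstep ((2 * R - a - t) / h) / h)" unfolding e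
    by (intro integrable_divide_zero dstep_affine(1)[OF c])
  show "(\<integral>t. dstep ((2 * R - a - t) / h) / h \<partial>lborel) = 1" unfolding e
    using dstep_affine(2)[OF c, of "(2 * R - a) / h"] h by simp
qed

lemma dstep_rise_scaled: "integrable lborel (\<lambda>t. dstep ((t - a) / h) / h * c)" "(\<integral>t. dstep ((t - a) / h) / h * c \<partial>lborel) = c"
proof -
  show "integrable lborel (\<lambda>t. dstep ((t - a) / h) / h * c)" by (intro integrable_mult_left dstep_rise(1))
  have "(\<integral>t. dstep ((t - a) / h) / h * c \<partial>lborel) = (\<integral>t. dstep ((t - a) / h) / h \<partial>lborel) * c"
    by (rule Bochner_Integration.integral_mult_left) (rule dstep_rise(1))
  also have "\<dots> = 1 * c" by (simp only: dstep_rise(2))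
  finally show "(\<integral>t. dstep ((t - a) / h) / h * c \<partial>lborel) = c" by simp
qed

lemma dstep_plateau_rise: "integrable lborel (\<lambda>t. dstep (t + L + 1))" "(\<integral>t. dstep (t + L + 1) \<partial>lborel) = 1"
  using dstep_affine[of 1 "L + 1"] by (simp_all add: add.assoc)

lemma dstep_plateau_fall: "integrable lborel (\<lambda>t. dstep (L + 1 - t))" "(\<integral>t. dstep (L + 1 - t) \<partial>lborel) = 1"
  using dstep_affine[of "-1" "L + 1"] by (simp_all add: add.commute)

lemma integrable_plateau: "integrable lborel plateau"
  by (rule integrable_continuous_on_vanishing_outside[of "-L-1" "L+1"]) (auto intro: smooth_real_continuous_on[OF smooth_real_plateau, THEN continuous_on_subset] plateau_eq_0)

lemma plateau_integral_ge: "(\<integral>t. plateau t \<partial>lborel) \<ge> 2 * L"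
proof -
  have "(\<integral>t. indicator {-L..L} t \<partial>lborel) \<le> (\<integral>t. plateau t \<partial>lborel)"
    by (rule integral_mono'[OF integrable_plateau]) (auto simp: indicator_def plateau_eq_1 plateau_nonneg)
  moreover have "(\<integral>t. indicator {-L..L} t \<partial>lborel) = 2 * L"
    using L by (simp add: measure_def)
  ultimately show ?thesis by simp
qed

lemma integrable_abs_dplateau: "integrable lborel (\<lambda>t. \<bar>dplateau t\<bar>)"
  by (rule integrable_continuous_on_vanishing_outside[of "-L-1" "L+1"])
     (auto intro!: continuous_intros intro: smooth_real_continuous_on[OF smooth_real_dplateau, THEN continuous_on_subset] dplateau_eq_0)

lemma integral_abs_dplateau_le: "(\<integral>t. \<bar>dplateau t\<bar> \<partial>lborel) \<le> 2"
proof -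
  have "(\<integral>t. \<bar>dplateau t\<bar> \<partial>lborel) \<le> (\<integral>t. dstep (t + L + 1) + dstep (L + 1 - t) \<partial>lborel)"
    by (rule integral_mono'[OF Bochner_Integration.integrable_add[OF dstep_plateau_rise(1) dstep_plateau_fall(1)]])
       (auto intro: abs_dplateau_le add_nonneg_nonneg dstep_nonneg)
  also have "\<dots> = 2" using dstep_plateau_rise dstep_plateau_fall by simp
  finally show ?thesis .
qed

lemma integrable_bump_weighted: "integrable lborel (\<lambda>t. \<bar>bump t\<bar> / bdist t powr w)"
  by (rule integrable_continuous_on_vanishing_outside[of "a" "2*R-a"])
     (auto intro!: continuous_intros intro: smooth_real_continuous_on[OF smooth_real_bump, THEN continuous_on_subset]
       bdist_continuous_on bump_eq_0 simp: bdist_nonzero)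

lemma integrable_dbump_weighted: "integrable lborel (\<lambda>t. \<bar>dbump t\<bar> / bdist t powr w)"
  by (rule integrable_continuous_on_vanishing_outside[of "a" "2*R-a"])
     (auto intro!: continuous_intros intro: smooth_real_continuous_on[OF smooth_real_dbump, THEN continuous_on_subset]
       bdist_continuous_on dbump_eq_0 simp: bdist_nonzero)

definition bump_moment :: "real \<Rightarrow> real" where
  "bump_moment w = (\<integral>t. \<bar>bump t\<bar> / bdist t powr w \<partial>lborel)"

definition dbump_moment :: "real \<Rightarrow> real" where
  "dbump_moment w = (\<integral>t. \<bar>dbump t\<bar> / bdist t powr w \<partial>lborel)"

lemma bump_moment_nonneg: "bump_moment w \<ge> 0"
  unfolding bump_moment_def by (rule integral_nonneg_AE) auto

lemma dbump_moment_le: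
  assumes w: "w \<ge> 0"
  shows "dbump_moment w \<le> 2 / a powr w"
proof -
  have pt: "\<bar>dbump t\<bar> / bdist t powr w \<le> (dstep ((t - a) / h) / h + dstep ((2 * R - a - t) / h) / h) / a powr w" for t
  proof (cases "a \<le> t \<and> t \<le> 2 * R - a")
    case True
    then have "a powr w \<le> bdist t powr w" using bdist_ge a w by (intro powr_mono2) auto
    moreover have "0 < a powr w" using a by simp
    ultimately show ?thesis using abs_dbump_le[of t]
      by (intro frac_le) auto
  next
    case False
    then show ?thesis using dbump_eq_0[of t] h by (auto intro!: divide_nonneg_nonneg add_nonneg_nonneg dstep_nonneg)
  qed
  have "dbump_moment w
      \<le> (\<integral>t. (dstep ((t - a) / h) / h + dstep ((2 * R - a - t) / h) / h) / a powr w \<partial>lborel)"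
    unfolding dbump_moment_def by (rule integral_mono'[OF integrable_divide[OF Bochner_Integration.integrable_add[OF dstep_rise(1) dstep_fall(1)]]])
       (use pt h in \<open>auto intro!: divide_nonneg_nonneg add_nonneg_nonneg dstep_nonneg\<close>)
  also have "\<dots> = 2 / a powr w"
    using dstep_rise dstep_fall by simp
  finally show ?thesis .
qed

lemma bump_moment_ge:
  assumes s: "1 \<le> s"
  shows "2 * ((a + h) powr (1 - s) - R powr (1 - s)) \<le> (s - 1) * bump_moment s"
proof -
  define f1 where "f1 t = indicator {a + h..R} t *\<^sub>R ((s - 1) * t powr (- s))" for t
  define f2 where "f2 t = indicator {2 * R - R..2 * R - (a + h)} t *\<^sub>R ((s - 1) * (2 * R - t) powr (- s))" for t
  have "continuous_on {a + h..R} (\<lambda>t. (s - 1) * t powr (- s))"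
    using a h by (intro continuous_intros) auto
  then have i1: "integrable lborel f1"
    unfolding f1_def by (rule borel_integrable_compact[OF compact_Icc])
  have "continuous_on {2 * R - R..2 * R - (a + h)} (\<lambda>t. (s - 1) * (2 * R - t) powr (- s))"
    using a h ah by (intro continuous_intros) auto
  then have i2: "integrable lborel f2"
    unfolding f2_def by (rule borel_integrable_compact[OF compact_Icc])
  have I1: "(\<integral>t. f1 t \<partial>lborel) = (a + h) powr (1 - s) - R powr (1 - s)"
    unfolding f1_def using a h ah by (intro integral_powr_minus_Icc) auto
  have I2: "(\<integral>t. f2 t \<partial>lborel) = (a + h) powr (1 - s) - R powr (1 - s)"
    unfolding f2_def using a h ah by (intro integral_powr_minus_reflected_Icc) auto
  have pt: "f1 t + f2 t \<le> (s - 1) * (\<bar>bump t\<bar> / bdist t powr s)" if "t \<noteq> R" for t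
  proof -
    consider "a + h \<le> t" "t < R" | "R < t" "t \<le> 2 * R - a - h" | "\<not> (a + h \<le> t \<and> t \<le> 2 * R - a - h)"
      using \<open>t \<noteq> R\<close> by linarith
    then show ?thesis
    proof cases
      case 1
      then have "bump t = 1" "bdist t = t" "t > 0" using bump_eq_1[of t] a h ah by (auto simp: bdist_def)
      then show ?thesis using 1 by (simp add: f1_def f2_def powr_minus divide_inverse)
    next
      case 2
      then have "bump t = 1" "bdist t = 2 * R - t" "2 * R - t > 0" using bump_eq_1[of t] a h ah by (auto simp: bdist_def)
      then show ?thesis using 2 by (simp add: f1_def f2_def powr_minus divide_inverse)
    next
      case 3
      then have "f1 t = 0" "f2 t = 0" using a h ah by (auto simp: f1_def f2_def)
      then show ?thesis using s by (simp add: divide_nonneg_nonneg)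
    qed
  qed
  have "(\<integral>t. f1 t + f2 t \<partial>lborel) \<le> (\<integral>t. (s - 1) * (\<bar>bump t\<bar> / bdist t powr s) \<partial>lborel)"
  proof (rule integral_mono_AE)
    show "AE t in lborel. f1 t + f2 t \<le> (s - 1) * (\<bar>bump t\<bar> / bdist t powr s)"
      using AE_lborel_singleton[of R] by eventually_elim (use pt in auto)
    show "integrable lborel (\<lambda>t. f1 t + f2 t)"
      using i1 i2 by simp
    show "integrable lborel (\<lambda>t. (s - 1) * (\<bar>bump t\<bar> / bdist t powr s))"
      by (intro integrable_mult_right integrable_bump_weighted)
  qed
  also have "\<dots> = (s - 1) * bump_moment s"
    unfolding bump_moment_def by (rule Bochner_Integration.integral_mult_right) (rule integrable_bump_weighted)
  finally show ?thesis
    using i1 i2 I1 I2 by simp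
qed

lemma bump_moment_le:
  assumes s: "s \<ge> 1"
  shows "bump_moment (s - 1) \<le> 2 * R * a powr (1 - s)"
proof -
  have pt: "\<bar>bump t\<bar> / bdist t powr (s - 1) \<le> indicator {a..2*R-a} t *\<^sub>R a powr (1 - s)" for t
  proof (cases "a \<le> t \<and> t \<le> 2 * R - a")
    case True
    have "a powr (s - 1) \<le> bdist t powr (s - 1)" using bdist_ge[of t] True a s by (intro powr_mono2) auto
    moreover have "0 < a powr (s - 1)" using a by simp
    ultimately have "\<bar>bump t\<bar> / bdist t powr (s - 1) \<le> 1 / a powr (s - 1)"
      using bump_le_1[of t] bump_nonneg[of t] by (intro frac_le) auto
    also have "1 / a powr (s - 1) = a powr (1 - s)" using a by (simp add: powr_minus_divide[symmetric] powr_minus)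
    finally show ?thesis using True by simp
  next
    case False
    then show ?thesis using bump_eq_0[of t] by auto
  qed
  have i: "integrable lborel (\<lambda>t. indicator {a..2*R-a} t *\<^sub>R a powr (1 - s))"
    by (rule borel_integrable_compact) auto
  have "bump_moment (s - 1) \<le> (\<integral>t. indicator {a..2*R-a} t *\<^sub>R a powr (1 - s) \<partial>lborel)"
    unfolding bump_moment_def by (rule integral_mono'[OF i]) (use pt in auto)
  also have "\<dots> = (2 * R - 2 * a) * a powr (1 - s)"
    using a ah h by (simp add: measure_def)
  also have "\<dots> \<le> 2 * R * a powr (1 - s)" using a by (intro mult_right_mono) auto
  finally show ?thesis .
qed

definition factor :: "'n \<Rightarrow> real \<Rightarrow> real" where
  "factor i = (if i = k then bump else plateau)"
definition factor' :: "'n \<Rightarrow> real \<Rightarrow> real" where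
  "factor' i = (if i = k then dbump else dplateau)"
definition test_fn :: "real^'n \<Rightarrow> real" where
  "test_fn x = (\<Prod>i\<in>UNIV. factor i (x $ i))"

lemma smooth_real_factor: "smooth_real (factor i)" by (simp add: factor_def smooth_real_bump smooth_real_plateau)
lemma deriv_factor: "deriv (factor i) = factor' i" by (simp add: factor_def factor'_def deriv_bump deriv_plateau)

lemma test_fn_eq: "test_fn = (\<lambda>x. \<Prod>i\<in>UNIV. factor i (x $ i))" by (simp add: test_fn_def[abs_def])

lemma grad_test_fn: "grad test_fn x $ j = (\<Prod>i\<in>UNIV. (if i = j then factor' i else factor i) (x $ i))"
  unfolding test_fn_eq grad_prod_coordinates[OF smooth_real_factor] deriv_factor ..

lemma grad_test_fn_eq: "grad test_fn = (\<lambda>x. \<chi> j. \<Prod>i\<in>UNIV. (if i = j then factor' i else factor i) (x $ i))"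
  by (auto simp: vec_eq_iff grad_test_fn)

lemma smooth_test_fn: "smooth test_fn"
  unfolding test_fn_eq by (rule smooth_prod_coordinates[OF smooth_real_factor])

lemma factor_normal_eq_0: "t \<le> a \<or> t \<ge> 2 * R - a \<Longrightarrow> factor k t = 0" by (simp add: factor_def bump_eq_0)

lemma test_fn_support:
  defines "lo \<equiv> (\<chi> i. if i = k then a else - L - 1) :: real^'n"
  defines "hi \<equiv> (\<chi> i. if i = k then 2 * R - a else L + 1) :: real^'n"
  shows "{x. test_fn x \<noteq> 0} \<subseteq> cbox lo hi"
proof
  fix x assume "x \<in> {x. test_fn x \<noteq> 0}"
  then have nz: "factor i (x $ i) \<noteq> 0" for i by (auto simp: test_fn_def)
  show "x \<in> cbox lo hi" unfolding mem_box_cart(2)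
  proof
    fix i
    show "lo $ i \<le> x $ i \<and> x $ i \<le> hi $ i"
    proof (cases "i = k")
      case True
      have "\<not> (x $ k \<le> a \<or> x $ k \<ge> 2 * R - a)" using nz[of k] bump_eq_0[of "x $ k"] by (auto simp: factor_def)
      then show ?thesis using True by (auto simp: lo_def hi_def)
    next
      case False
      have "\<not> (x $ i \<le> -L - 1 \<or> x $ i \<ge> L + 1)" using nz[of i] plateau_eq_0[of "x $ i"] False by (auto simp: factor_def)
      then show ?thesis using False by (auto simp: lo_def hi_def)
    qed
  qed
qed

lemma test_fn_Cc_inf: "test_fn \<in> Cc_inf (slab k R)"
proof -
  define lo where "lo = ((\<chi> i. if i = k then a else - L - 1) :: real^'n)"
  define hi where "hi = ((\<chi> i. if i = k then 2 * R - a else L + 1) :: real^'n)"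
  have sub: "tsupport test_fn \<subseteq> cbox lo hi"
    unfolding tsupport_def lo_def hi_def by (rule closure_minimal[OF test_fn_support closed_cbox])
  have "compact (cbox lo hi \<inter> tsupport test_fn)"
    by (rule compact_Int_closed) (auto simp: tsupport_def)
  moreover have "cbox lo hi \<inter> tsupport test_fn = tsupport test_fn" using sub by blast
  ultimately have c: "compact (tsupport test_fn)" by simp
  have "cbox lo hi \<subseteq> slab k R"
    using a ah h by (auto simp: mem_box_cart slab_def lo_def hi_def dest!: spec[of _ k])
  then show ?thesis using sub c smooth_test_fn by (auto simp: Cc_inf_def)
qed

lemma test_fn_nonzero: "test_fn \<noteq> (\<lambda>x. 0)"
proof
  assume z: "test_fn = (\<lambda>x. 0)"
  define x0 where "x0 = ((\<chi> i. if i = k then R else 0) :: real^'n)"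
  have "factor i (x0 $ i) = 1" for i
    using bump_eq_1[of R] plateau_eq_1[of 0] a h ah L by (auto simp: factor_def x0_def)
  then have "test_fn x0 = 1" by (simp add: test_fn_def)
  then show False using z by simp
qed

definition slab_dist :: "real^'n \<Rightarrow> real" where
  "slab_dist x = infdist x (UNIV - slab k R)"

lemma slab_dist_eq: "x \<in> slab k R \<Longrightarrow> slab_dist x = bdist (x $ k)"
  by (simp add: slab_dist_def infdist_slab bdist_def)

lemma slab_dist_outside: "x \<notin> slab k R \<Longrightarrow> slab_dist x = 0"
  by (simp add: slab_dist_def)

lemma slab_dist_nonneg: "slab_dist x \<ge> 0" by (simp add: slab_dist_def infdist_nonneg)

lemma bdist_pos: "x \<in> slab k R \<Longrightarrow> bdist (x $ k) > 0"
  by (auto simp: slab_def bdist_def)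

definition grad_bound_factor :: "real \<Rightarrow> 'n \<Rightarrow> 'n \<Rightarrow> real \<Rightarrow> real" where
  "grad_bound_factor w j i t = (if i = j then \<bar>factor' i t\<bar> else \<bar>factor i t\<bar>) / (if i = k then bdist t powr w else 1)"

lemma grad_bound_factor_nonneg: "grad_bound_factor w j i t \<ge> 0" by (simp add: grad_bound_factor_def)

lemma grad_weighted_le_sum_prod:
  fixes x :: "real^'n"
  shows "norm (grad test_fn x) / slab_dist x powr w \<le> (\<Sum>j\<in>UNIV. \<Prod>i\<in>UNIV. grad_bound_factor w j i (x $ i))"
proof (cases "x \<in> slab k R")
  case False
  then show ?thesis by (simp add: slab_dist_outside sum_nonneg prod_nonneg grad_bound_factor_nonneg)
next
  case True
  let ?D = "bdist (x $ k) powr w"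
  have D: "?D > 0" using bdist_pos[OF True] by simp
  have eq: "(\<Prod>i\<in>UNIV. grad_bound_factor w j i (x $ i)) = \<bar>grad test_fn x $ j\<bar> / ?D" for j
  proof -
    have "(\<Prod>i\<in>UNIV. grad_bound_factor w j i (x $ i)) =
       (\<Prod>i\<in>UNIV. \<bar>(if i = j then factor' i else factor i) (x $ i)\<bar>) / (\<Prod>i\<in>UNIV. if i = k then bdist (x $ i) powr w else 1)"
      unfolding grad_bound_factor_def prod_dividef[symmetric] by (intro prod.cong) auto
    also have "\<dots> = \<bar>grad test_fn x $ j\<bar> / ?D"
      by (simp add: grad_test_fn abs_prod)
    finally show ?thesis .
  qed
  have "norm (grad test_fn x) / slab_dist x powr w \<le> (\<Sum>j\<in>UNIV. \<bar>grad test_fn x $ j\<bar>) / ?D"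
    using D slab_dist_eq[OF True] norm_le_l1_cart[of "grad test_fn x"] by (simp add: divide_right_mono)
  also have "\<dots> = (\<Sum>j\<in>UNIV. \<Prod>i\<in>UNIV. grad_bound_factor w j i (x $ i))"
    by (simp add: eq sum_divide_distrib)
  finally show ?thesis .
qed

text \<open>Only the rising edge of the bump is kept, where the distance to the boundary is at most \<open>a + h\<close>.\<close>

definition grad_lower_factor :: "real \<Rightarrow> 'n \<Rightarrow> real \<Rightarrow> real" where
  "grad_lower_factor w i t = (if i = k then dstep ((t - a) / h) / h * (a + h) powr (- w) else plateau t)"

lemma prod_le_grad_weighted:
  fixes x :: "real^'n"
  assumes w: "w \<ge> 0"
  shows "(\<Prod>i\<in>UNIV. grad_lower_factor w i (x $ i)) \<le> norm (grad test_fn x) / slab_dist x powr w"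
proof -
  let ?t = "x $ k"
  have split: "(\<Prod>i\<in>UNIV. grad_lower_factor w i (x $ i)) = grad_lower_factor w k ?t * (\<Prod>i\<in>UNIV-{k}. plateau (x $ i))"
    by (subst prod.remove[of UNIV k]) (auto simp: grad_lower_factor_def intro!: prod.cong)
  show ?thesis
  proof (cases "a \<le> ?t \<and> ?t \<le> a + h")
    case False
    then have "(?t - a) / h < 0 \<or> (?t - a) / h > 1" using h by (auto simp: field_simps)
    then have "dstep ((?t - a) / h) = 0" using dstep_eq_0_left dstep_eq_0_right by fastforce
    then have "grad_lower_factor w k ?t = 0" by (simp add: grad_lower_factor_def)
    then have z: "(\<Prod>i\<in>UNIV. grad_lower_factor w i (x $ i)) = 0" unfolding split by (simp only: mult_zero_left)
    have "0 \<le> norm (grad test_fn x) / slab_dist x powr w" using slab_dist_nonneg[of x] by simp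
    then show ?thesis unfolding z .
  next
    case True
    have xs: "x \<in> slab k R" using True a h ah by (auto simp: slab_def)
    have d: "slab_dist x = ?t" using slab_dist_eq[OF xs] True ah by (simp add: bdist_def)
    have tp: "?t > 0" using True a by simp
    have gk: "grad test_fn x $ k = dbump ?t * (\<Prod>i\<in>UNIV-{k}. plateau (x $ i))"
      by (simp add: grad_test_fn, subst prod.remove[of UNIV k]) (auto simp: factor'_def factor_def intro!: prod.cong)
    have dp: "dbump ?t = dstep ((?t - a) / h) / h" using dbump_left True by simp
    have n1: "0 \<le> dbump ?t" using dp h dstep_nonneg[of "(?t - a) / h"] by simp
    have n2: "0 \<le> (\<Prod>i\<in>UNIV-{k}. plateau (x $ i))" by (intro prod_nonneg) (simp add: plateau_nonneg)
    have nn: "0 \<le> dbump ?t * (\<Prod>i\<in>UNIV-{k}. plateau (x $ i))" using n1 n2 by (rule mult_nonneg_nonneg)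
    have "(\<Prod>i\<in>UNIV. grad_lower_factor w i (x $ i)) = dbump ?t * (\<Prod>i\<in>UNIV-{k}. plateau (x $ i)) / (a + h) powr w"
      unfolding split by (simp add: grad_lower_factor_def dp powr_minus divide_inverse)
    also have "\<dots> \<le> dbump ?t * (\<Prod>i\<in>UNIV-{k}. plateau (x $ i)) / ?t powr w"
      using nn tp True w by (intro divide_left_mono powr_mono2 mult_pos_pos) auto
    also have "\<dots> \<le> norm (grad test_fn x) / slab_dist x powr w"
      unfolding d using component_le_norm_cart[of "grad test_fn x" k] gk nn tp
      by (intro divide_right_mono) auto
    finally show ?thesis .
  qed
qed

definition weighted_factor :: "real \<Rightarrow> 'n \<Rightarrow> real \<Rightarrow> real" where
  "weighted_factor w i t = \<bar>factor i t\<bar> / (if i = k then bdist t powr w else 1)"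

lemma weighted_test_fn_eq_prod:
  fixes x :: "real^'n"
  shows "\<bar>test_fn x\<bar> / slab_dist x powr w = (\<Prod>i\<in>UNIV. weighted_factor w i (x $ i))"
proof (cases "x \<in> slab k R")
  case False
  then have "x $ k \<le> a \<or> x $ k \<ge> 2 * R - a" using a by (auto simp: slab_def)
  then have z: "weighted_factor w k (x $ k) = 0" by (simp add: weighted_factor_def factor_normal_eq_0)
  have ex: "\<exists>i\<in>UNIV. weighted_factor w i (x $ i) = 0" using z by blast
  have "(\<Prod>i\<in>UNIV. weighted_factor w i (x $ i)) = 0" by (rule prod_zero[OF _ ex]) simp
  then show ?thesis using False by (simp add: slab_dist_outside)
next
  case True
  have "(\<Prod>i\<in>UNIV. weighted_factor w i (x $ i)) =
       (\<Prod>i\<in>UNIV. \<bar>factor i (x $ i)\<bar>) / (\<Prod>i\<in>UNIV. if i = k then bdist (x $ i) powr w else 1)"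
    unfolding weighted_factor_def prod_dividef[symmetric] by (intro prod.cong) auto
  then show ?thesis using slab_dist_eq[OF True] by (simp add: test_fn_def abs_prod)
qed

lemma abs_plateau: "\<bar>plateau t\<bar> = plateau t" using plateau_nonneg by simp

lemma integrable_grad_bound_factor: "integrable lborel (grad_bound_factor w j i)"
proof -
  consider "i = k" "j = k" | "i = k" "j \<noteq> k" | "i \<noteq> k" "i = j" | "i \<noteq> k" "i \<noteq> j" by blast
  then show ?thesis
  proof cases
    case 1 then show ?thesis using integrable_dbump_weighted[of w] by (simp add: grad_bound_factor_def[abs_def] factor'_def)
  next
    case 2 then show ?thesis using integrable_bump_weighted[of w] by (simp add: grad_bound_factor_def[abs_def] factor_def)
  next
    case 3 then show ?thesis using integrable_abs_dplateau by (simp add: grad_bound_factor_def[abs_def] factor'_def)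
  next
    case 4 then show ?thesis using integrable_plateau by (simp add: grad_bound_factor_def[abs_def] factor_def abs_plateau)
  qed
qed

lemma integrable_grad_lower_factor: "integrable lborel (grad_lower_factor w i)"
  using dstep_rise_scaled(1)[of "(a + h) powr (- w)"] integrable_plateau by (cases "i = k") (simp_all add: grad_lower_factor_def[abs_def])

lemma integrable_weighted_factor: "integrable lborel (weighted_factor w i)"
  using integrable_bump_weighted[of w] integrable_plateau by (cases "i = k") (simp_all add: weighted_factor_def[abs_def] factor_def abs_plateau)

lemma smooth_real_factor': "smooth_real (factor' i)" by (simp add: factor'_def smooth_real_dbump smooth_real_dplateau)

lemma continuous_on_grad_test_fn: "continuous_on UNIV (grad test_fn)"
  unfolding grad_test_fn_eq
  by (intro continuous_intros continuous_on_coordinate) (simp add: smooth_real_factor' smooth_real_factor)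

lemma continuous_on_slab_dist: "continuous_on UNIV slab_dist"
  unfolding slab_dist_def[abs_def] by (intro continuous_intros)

lemma grad_weighted_measurable: "(\<lambda>x. norm (grad test_fn x) / slab_dist x powr w) \<in> borel_measurable lborel"
proof -
  have [measurable]: "grad test_fn \<in> borel_measurable borel" by (rule borel_measurable_continuous_onI[OF continuous_on_grad_test_fn])
  have [measurable]: "slab_dist \<in> borel_measurable borel" by (rule borel_measurable_continuous_onI[OF continuous_on_slab_dist])
  show ?thesis by measurable
qed

lemma integrable_grad_weighted: "integrable lborel (\<lambda>x::real^'n::finite. norm (grad test_fn x) / slab_dist x powr w)"
proof (rule Bochner_Integration.integrable_bound)
  show "integrable lborel (\<lambda>x::real^'n. \<Sum>j\<in>UNIV. \<Prod>i\<in>UNIV. grad_bound_factor w j i (x $ i))"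
    by (intro Bochner_Integration.integrable_sum lborel_integral_prod_vec(1) integrable_grad_bound_factor)
  show "(\<lambda>x::real^'n. norm (grad test_fn x) / slab_dist x powr w) \<in> borel_measurable lborel" by (rule grad_weighted_measurable)
  show "AE x in lborel. norm (norm (grad test_fn x) / slab_dist x powr w) \<le> norm (\<Sum>j\<in>UNIV. \<Prod>i\<in>UNIV. grad_bound_factor w j i (x $ i))"
  proof (rule AE_I2)
    fix x :: "real^'n"
    have "0 \<le> norm (grad test_fn x) / slab_dist x powr w" using slab_dist_nonneg[of x] by simp
    then show "norm (norm (grad test_fn x) / slab_dist x powr w) \<le> norm (\<Sum>j\<in>UNIV. \<Prod>i\<in>UNIV. grad_bound_factor w j i (x $ i))"
      using grad_weighted_le_sum_prod[of x w] by simp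
  qed
qed

definition plateau_mass :: real where "plateau_mass = (\<integral>t. plateau t \<partial>lborel)"
definition transverse_mass :: real where "transverse_mass = (\<Prod>i\<in>UNIV-{k}. plateau_mass)"

lemma plateau_mass_pos: "plateau_mass \<ge> 2 * L" "plateau_mass > 0" using plateau_integral_ge L by (auto simp: plateau_mass_def)

lemma transverse_mass_pos: "transverse_mass > 0" using plateau_mass_pos by (simp add: transverse_mass_def)

lemma grad_weighted_integral_ge:
  assumes w: "w \<ge> 0"
  shows "(a + h) powr (- w) * transverse_mass \<le> (\<integral>x. norm (grad test_fn x) / slab_dist x powr w \<partial>(lborel :: (real^'n) measure))"
proof -
  have "(\<integral>x. (\<Prod>i\<in>UNIV. grad_lower_factor w i (x $ i)) \<partial>(lborel :: (real^'n) measure)) = (\<Prod>i\<in>UNIV. \<integral>t. grad_lower_factor w i t \<partial>lborel)"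
    by (rule lborel_integral_prod_vec(2)[OF integrable_grad_lower_factor])
  also have "\<dots> = (\<integral>t. grad_lower_factor w k t \<partial>lborel) * (\<Prod>i\<in>UNIV-{k}. \<integral>t. grad_lower_factor w i t \<partial>lborel)"
    by (subst prod.remove[of UNIV k]) auto
  also have "\<dots> = (a + h) powr (- w) * transverse_mass"
    using dstep_rise_scaled(2)[of "(a + h) powr (- w)"] by (simp add: grad_lower_factor_def[abs_def] transverse_mass_def plateau_mass_def)
  finally have e: "(\<integral>x. (\<Prod>i\<in>UNIV. grad_lower_factor w i (x $ i)) \<partial>(lborel :: (real^'n) measure)) = (a + h) powr (- w) * transverse_mass" .
  have "(\<integral>x. (\<Prod>i\<in>UNIV. grad_lower_factor w i (x $ i)) \<partial>(lborel :: (real^'n) measure)) \<le> (\<integral>x. norm (grad test_fn x) / slab_dist x powr w \<partial>(lborel :: (real^'n) measure))"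
    by (rule integral_mono'[OF integrable_grad_weighted]) (use prod_le_grad_weighted[OF w] slab_dist_nonneg in auto)
  then show ?thesis using e by simp
qed

lemma integral_grad_bound_factor:
  "(\<integral>t. grad_bound_factor w j i t \<partial>lborel) =
     (if i = k then (if j = k then dbump_moment w else bump_moment w) else (if i = j then (\<integral>t. \<bar>dplateau t\<bar> \<partial>lborel) else plateau_mass))"
  by (auto simp: grad_bound_factor_def[abs_def] factor_def factor'_def dbump_moment_def bump_moment_def plateau_mass_def abs_plateau)

lemma prod_integral_grad_bound_factor_normal: "(\<Prod>i\<in>UNIV. \<integral>t. grad_bound_factor w k i t \<partial>lborel) = dbump_moment w * transverse_mass"
  by (subst prod.remove[of UNIV k]) (auto simp: integral_grad_bound_factor transverse_mass_def intro!: prod.cong)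

lemma prod_integral_grad_bound_factor_tangential:
  assumes j: "j \<noteq> k"
  shows "(\<Prod>i\<in>UNIV. \<integral>t. grad_bound_factor w j i t \<partial>lborel) \<le> 2 * bump_moment w * transverse_mass / plateau_mass"
proof -
  let ?r = "(\<Prod>i\<in>UNIV-{k}-{j}. plateau_mass)"
  define c where "c i = (\<integral>t. grad_bound_factor w j i t \<partial>lborel)" for i
  have A: "(\<Prod>i\<in>UNIV. c i) = c k * (\<Prod>i\<in>UNIV-{k}. c i)" by (rule prod.remove) auto
  have B: "(\<Prod>i\<in>UNIV-{k}. c i) = c j * (\<Prod>i\<in>UNIV-{k}-{j}. c i)" by (rule prod.remove) (use j in auto)
  have C: "(\<Prod>i\<in>UNIV-{k}-{j}. c i) = ?r" by (rule prod.cong) (auto simp: c_def integral_grad_bound_factor)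
  have "(\<Prod>i\<in>UNIV. \<integral>t. grad_bound_factor w j i t \<partial>lborel) = bump_moment w * ((\<integral>t. \<bar>dplateau t\<bar> \<partial>lborel) * ?r)"
    using A B C j by (simp add: c_def[symmetric]) (simp add: c_def integral_grad_bound_factor)
  also have "\<dots> \<le> bump_moment w * (2 * ?r)"
    using integral_abs_dplateau_le bump_moment_nonneg plateau_mass_pos by (intro mult_left_mono mult_right_mono) auto
  also have "transverse_mass = plateau_mass * ?r" unfolding transverse_mass_def by (rule prod.remove) (use j in auto)
  then have "bump_moment w * (2 * ?r) = 2 * bump_moment w * transverse_mass / plateau_mass" using plateau_mass_pos by (simp add: field_simps)
  finally show ?thesis .
qed

lemma grad_weighted_integral_le:
  "(\<integral>x. norm (grad test_fn x) / slab_dist x powr w \<partial>(lborel :: (real^'n) measure))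
     \<le> dbump_moment w * transverse_mass + real CARD('n) * (2 * bump_moment w * transverse_mass / plateau_mass)"
proof -
  have "(\<integral>x. norm (grad test_fn x) / slab_dist x powr w \<partial>(lborel :: (real^'n) measure))
      \<le> (\<integral>x. (\<Sum>j\<in>UNIV. \<Prod>i\<in>UNIV. grad_bound_factor w j i (x $ i)) \<partial>(lborel :: (real^'n) measure))"
    by (rule integral_mono'[OF Bochner_Integration.integrable_sum[OF lborel_integral_prod_vec(1)[OF integrable_grad_bound_factor]]])
       (auto intro: grad_weighted_le_sum_prod sum_nonneg prod_nonneg grad_bound_factor_nonneg)
  also have "\<dots> = (\<Sum>j\<in>UNIV. \<Prod>i\<in>UNIV. \<integral>t. grad_bound_factor w j i t \<partial>lborel)"
    by (subst Bochner_Integration.integral_sum[OF lborel_integral_prod_vec(1)[OF integrable_grad_bound_factor]])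
       (simp add: lborel_integral_prod_vec(2)[OF integrable_grad_bound_factor])
  also have "\<dots> = dbump_moment w * transverse_mass + (\<Sum>j\<in>UNIV-{k}. \<Prod>i\<in>UNIV. \<integral>t. grad_bound_factor w j i t \<partial>lborel)"
    by (subst sum.remove[of UNIV k]) (auto simp: prod_integral_grad_bound_factor_normal)
  also have "(\<Sum>j\<in>UNIV-{k}. \<Prod>i\<in>UNIV. \<integral>t. grad_bound_factor w j i t \<partial>lborel) \<le> (\<Sum>j\<in>UNIV-{k}. 2 * bump_moment w * transverse_mass / plateau_mass)"
    by (intro sum_mono prod_integral_grad_bound_factor_tangential) auto
  also have "\<dots> \<le> real CARD('n) * (2 * bump_moment w * transverse_mass / plateau_mass)"
  proof -
    have "0 \<le> 2 * bump_moment w * transverse_mass / plateau_mass" using bump_moment_nonneg[of w] transverse_mass_pos plateau_mass_pos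
      by (intro divide_nonneg_pos mult_nonneg_nonneg) auto
    moreover have "card (UNIV - {k}) \<le> CARD('n)" by (rule card_mono) auto
    ultimately have "real (card (UNIV - {k})) * (2 * bump_moment w * transverse_mass / plateau_mass) \<le> real CARD('n) * (2 * bump_moment w * transverse_mass / plateau_mass)"
      by (intro mult_right_mono) auto
    then show ?thesis by (simp only: sum_constant)
  qed
  finally show ?thesis by simp
qed

lemma weighted_test_fn_integral:
  "(\<integral>x. \<bar>test_fn x\<bar> / slab_dist x powr w \<partial>(lborel :: (real^'n) measure)) = bump_moment w * transverse_mass"
proof -
  have "(\<integral>x. \<bar>test_fn x\<bar> / slab_dist x powr w \<partial>(lborel :: (real^'n) measure)) = (\<integral>x. (\<Prod>i\<in>UNIV. weighted_factor w i (x $ i)) \<partial>(lborel :: (real^'n) measure))"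
    by (simp add: weighted_test_fn_eq_prod)
  also have "\<dots> = (\<Prod>i\<in>UNIV. \<integral>t. weighted_factor w i t \<partial>lborel)" by (rule lborel_integral_prod_vec(2)[OF integrable_weighted_factor])
  also have "\<dots> = bump_moment w * transverse_mass"
    by (subst prod.remove[of UNIV k]) (auto simp: weighted_factor_def[abs_def] factor_def bump_moment_def transverse_mass_def plateau_mass_def abs_plateau intro!: prod.cong)
  finally show ?thesis .
qed

lemma hardy_numerator_le:
  assumes s: "s \<ge> 1" and h_eq: "h = a powr s"
    and L_large: "real CARD('n) * (2 * R * a powr (1 - s)) < L"
  shows "(\<integral>x. norm (grad test_fn x) / slab_dist x powr (s - 1) \<partial>lborel)
           - (s - 1) * (\<integral>x. \<bar>test_fn x\<bar> / slab_dist x powr s \<partial>lborel)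
         \<le> (2 * (s - 1) + 2 * R powr (1 - s) + 1) * transverse_mass"
proof -
  have "a powr (1 - s) - (a + h) powr (1 - s) \<le> (s - 1) * h * a powr (- s)"
    by (rule powr_1_minus_diff_le) (use a h s in auto)
  also have "(s - 1) * h * a powr (- s) = s - 1"
    using a by (simp add: h_eq powr_minus field_simps)
  finally have decrease: "a powr (1 - s) - (a + h) powr (1 - s) \<le> s - 1" .
  have "dbump_moment (s - 1) \<le> 2 / a powr (s - 1)"
    by (rule dbump_moment_le) (use s in auto)
  also have "2 / a powr (s - 1) = 2 * a powr (1 - s)"
    using a by (simp add: powr_diff powr_minus field_simps)
  finally have "dbump_moment (s - 1) \<le> 2 * a powr (1 - s)" .
  moreover have "2 * ((a + h) powr (1 - s) - R powr (1 - s)) \<le> (s - 1) * bump_moment s"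
    by (rule bump_moment_ge[OF s])
  ultimately have normal: "dbump_moment (s - 1) - (s - 1) * bump_moment s \<le> 2 * (s - 1) + 2 * R powr (1 - s)"
    using decrease by (smt (verit))
  have "real CARD('n) * (2 * bump_moment (s - 1) / plateau_mass)
      \<le> real CARD('n) * (2 * (2 * R * a powr (1 - s)) / (2 * L))"
    using bump_moment_le[OF s] plateau_mass_pos L bump_moment_nonneg[of "s - 1"]
    by (intro mult_left_mono frac_le) auto
  also have "\<dots> < 1"
    using L L_large by (simp add: field_simps)
  finally have tangential: "real CARD('n) * (2 * bump_moment (s - 1) / plateau_mass) < 1" .
  have "(\<integral>x. norm (grad test_fn x) / slab_dist x powr (s - 1) \<partial>lborel)
           - (s - 1) * (\<integral>x. \<bar>test_fn x\<bar> / slab_dist x powr s \<partial>lborel)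
      \<le> transverse_mass * (dbump_moment (s - 1) - (s - 1) * bump_moment s)
        + transverse_mass * (real CARD('n) * (2 * bump_moment (s - 1) / plateau_mass))"
    using grad_weighted_integral_le[of "s - 1"] weighted_test_fn_integral[of s]
    by (simp add: algebra_simps)
  also have "\<dots> \<le> transverse_mass * (2 * (s - 1) + 2 * R powr (1 - s)) + transverse_mass * 1"
    using normal tangential transverse_mass_pos
    by (intro add_mono mult_left_mono) auto
  finally show ?thesis by (simp add: algebra_simps)
qed

lemma set_integral_slab:
  assumes "\<And>x. x \<notin> slab k R \<Longrightarrow> f x = 0"
  shows "(LINT x:slab k R|lborel. f x) = (\<integral>x. f x \<partial>lborel)"
  unfolding set_lebesgue_integral_def
  by (rule Bochner_Integration.integral_cong) (auto simp: indicator_def assms)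

lemma hardy_quotient_le:
  assumes s: "s \<ge> 1" and \<alpha>: "\<alpha> \<ge> 0" and h_eq: "h = a powr s"
    and L_large: "real CARD('n) * (2 * R * a powr (1 - s)) < L"
  shows "((LINT x:slab k R|lborel. norm (grad test_fn x) / slab_dist x powr (s - 1))
           - (s - 1) * (LINT x:slab k R|lborel. \<bar>test_fn x\<bar> / slab_dist x powr s))
         / (LINT x:slab k R|lborel. norm (grad test_fn x) / slab_dist x powr \<alpha>)
         \<le> (2 * (s - 1) + 2 * R powr (1 - s) + 1) * (a + h) powr \<alpha>"
    (is "(?N1 - (s - 1) * ?N2) / ?D \<le> ?K * _")
proof -
  have D_ge: "(a + h) powr (- \<alpha>) * transverse_mass \<le> ?D"
    using grad_weighted_integral_ge[OF \<alpha>] by (subst set_integral_slab) (auto simp: slab_dist_outside)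
  have "?N1 - (s - 1) * ?N2 \<le> ?K * transverse_mass"
    using hardy_numerator_le[OF s h_eq L_large] by (subst (1 2) set_integral_slab) (auto simp: slab_dist_outside)
  moreover have "0 < (a + h) powr (- \<alpha>) * transverse_mass"
    using a h transverse_mass_pos by simp
  moreover have "0 \<le> ?K * transverse_mass"
    using s transverse_mass_pos by (intro mult_nonneg_nonneg add_nonneg_nonneg) auto
  ultimately have "(?N1 - (s - 1) * ?N2) / ?D \<le> ?K * transverse_mass / ((a + h) powr (- \<alpha>) * transverse_mass)"
    using D_ge by (meson divide_right_mono frac_le order.trans less_le_trans)
  also have "\<dots> = ?K * (a + h) powr \<alpha>"
    using transverse_mass_pos by (simp add: powr_minus field_simps)
  finally show ?thesis .
qed

end

theorem lemma2p14:
  fixes R \<alpha> s C0 :: real and k :: "'n::finite"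
  defines "S \<equiv> slab k R"
  defines "d \<equiv> (\<lambda>x::real^'n. infdist x (UNIV - S))"
  assumes "R > 0" and "\<alpha> \<ge> 0" and "s \<ge> 1" and "C0 > 0"
  assumes H: "\<forall>u \<in> Cc_inf S - {(\<lambda>x. 0)}.
     ((LINT x:S|lborel. norm (grad u x) / d x powr (s - 1))
        - (s - 1) * (LINT x:S|lborel. \<bar>u x\<bar> / d x powr s))
     / (LINT x:S|lborel. norm (grad u x) / d x powr \<alpha>) \<ge> C0"
  shows "\<alpha> = 0"
proof (rule ccontr)
  assume "\<alpha> \<noteq> 0"
  with \<open>\<alpha> \<ge> 0\<close> have "\<alpha> > 0" by simp
  define K where "K = 2 * (s - 1) + 2 * R powr (1 - s) + 1"
  have "K \<ge> 0"
    unfolding K_def using \<open>s \<ge> 1\<close> by (intro add_nonneg_nonneg) auto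
  have "((\<lambda>a. K * (2 * a) powr \<alpha>) \<longlongrightarrow> K * 0) (at_right 0)"
    using \<open>\<alpha> > 0\<close> by (intro tendsto_mult tendsto_const tendsto_zero_powrI eventually_at_rightI[of 0 1])
      (auto intro!: tendsto_eq_intros)
  then have "\<forall>\<^sub>F a in at_right 0. 0 < a \<and> a \<le> 1 \<and> a < R / 2 \<and> K * (2 * a) powr \<alpha> < C0"
    using \<open>C0 > 0\<close> \<open>R > 0\<close>
    by (intro eventually_conj eventually_at_right_less order_tendstoD(2)
          eventually_at_rightI[of 0 1] eventually_at_rightI[of 0 "R / 2"]) auto
  then obtain a where a: "0 < a" "a \<le> 1" "a < R / 2" and small: "K * (2 * a) powr \<alpha> < C0"
    using eventually_happens trivial_limit_at_right_real by blast
  define h where "h = a powr s"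
  define L where "L = real CARD('n) * (2 * R * a powr (1 - s)) + 1"
  have "0 < h" "h \<le> a"
    using a \<open>s \<ge> 1\<close> by (auto simp: h_def intro: powr_mono'[of 1 s a, simplified])
  interpret slab_test_fn R a h L k
    using a \<open>0 < h\<close> \<open>h \<le> a\<close> \<open>R > 0\<close> by unfold_locales (auto simp: L_def add_nonneg_pos)
  have "d = slab_dist"
    by (simp add: d_def S_def slab_dist_def fun_eq_iff)
  then have "C0 \<le> ((LINT x:slab k R|lborel. norm (grad test_fn x) / slab_dist x powr (s - 1))
           - (s - 1) * (LINT x:slab k R|lborel. \<bar>test_fn x\<bar> / slab_dist x powr s))
         / (LINT x:slab k R|lborel. norm (grad test_fn x) / slab_dist x powr \<alpha>)"
    using H test_fn_Cc_inf test_fn_nonzero by (auto simp: S_def)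
  also have "\<dots> \<le> K * (a + h) powr \<alpha>"
    unfolding K_def using \<open>s \<ge> 1\<close> \<open>\<alpha> \<ge> 0\<close> by (rule hardy_quotient_le) (auto simp: h_def L_def)
  also have "\<dots> \<le> K * (2 * a) powr \<alpha>"
    using a \<open>h \<le> a\<close> \<open>0 < h\<close> \<open>\<alpha> \<ge> 0\<close> \<open>K \<ge> 0\<close> by (intro mult_left_mono powr_mono2) auto
  finally show False using small by simp
qed

end
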